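(* Let $(X,d,f)$ be a dynamical system and let $\mathcal{A}=\{\mathcal{U}_n\}_{n\in\mathbb{N}}$ be a complete tame defining sequence of $(X,d)$. Assume that $f$ has the finite shadowing property. Then: (i) $f$ is conjugate to the inverse limit of a sequence of 1-step shifts on a countable alphabet; more precisely, $(X,d,f)$ is topologically conjugate to $\big(\varprojlim(\hookrightarrow,\mathcal{PO}(\mathcal{U}_n)),\sigma^*\big)$; (ii) if moreover $f$ is uniformly continuous, then this conjugacy can be chosen uniform, i.e. the conjugating homeomorphism and its inverse are uniformly continuous.
   Context: All spaces are nonempty separable metrizable spaces. A dynamical system $(X,d,f)$ is a space $X$ with an admissible metric $d$ and a continuous map $f:X\to X$. A partition of $X$ is a cover by pairwise disjoint nonempty clopen sets; for a partition $\mathcal{U}$ and $x\in X$, $\mathcal{U}[x]$ is the element of $\mathcal{U}$ containing $x$. A defining sequence of $X$ is a sequence $\{\mathcal{U}_n\}_{n\in\mathbb{N}}$ of partitions such that each element of $\mathcal{U}_{n+1}$ is contained in an element of $\mathcal{U}_n$, and $\bigcup_n\mathcal{U}_n$ is a basis of the topology. It is complete if whenever $U_n\in\mathcal{U}_n$ with $U_{n+1}\subseteq U_n$ for all $n$, $\bigcap_nU_n\neq\emptyset$. It is tame (with respect to $d$) if $S_n:=\sup\{\operatorname{diam}(O):O\in\mathcal{U}_n\}\to0$ and for each $n$ there is $\rho_n>0$ with $d(x_1,x_2)\ge\rho_n$ whenever $x_1,x_2$ lie in distinct elements of $\mathcal{U}_n$. A $\delta$-pseudo-orbit is a (finite or infinite)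 sequence $(x_n)$ with $d(f(x_n),x_{n+1})<\delta$ for all consecutive indices; $x$ $\varepsilon$-shadows $(x_n)$ if $d(f^n(x),x_n)<\varepsilon$ for all indices $n$. $f$ has the finite shadowing property if for every $\varepsilon>0$ there is $\delta>0$ such that every finite $\delta$-pseudo-orbit is $\varepsilon$-shadowed by some point; the shadowing property is the same with infinite pseudo-orbits. For a partition $\mathcal{U}$ (with the discrete metric), $\mathcal{PO}(\mathcal{U})=\{(O_i)_{i\in\mathbb{N}}\in\mathcal{U}^{\mathbb{N}}: f(O_i)\cap O_{i+1}\neq\emptyset\ \forall i\}$, a 1-step shift space (shift space over the countable alphabet $\mathcal{U}$ defined by forbidden words of length 2) with shift map $\sigma(O_i)_i=(O_{i+1})_i$ and metric $d((O_i),(O'_i))=1/(i+1)$ for the least $i$ with $O_i\ne O'_i$. The bonding map $\hookrightarrow:\mathcal{PO}(\mathcal{U}_{n+1})\to\mathcal{PO}(\mathcal{U}_n)$ sends $(O_i)$ to the unique $(V_i)\in\mathcal{U}_n^{\mathbb{N}}$ with $O_i\subseteq V_i$ for all $i$. The inverse limit $\varprojlim(\hookrightarrow,\mathcal{PO}(\mathcal{U}_n))=\{(y_n)\in\prod_n\mathcal{PO}(\mathcal{U}_n): y_n=\hookrightarrow(y_{n+1})\ \forall n\}$, with metric $d_\Pi((y_n),(z_n))=\max_n d(y_n,z_n)/(n+1)$, and $\sigma^*$ is the restriction to it of the product of the shift maps. *)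

theory Defs
  imports "HOL-Analysis.Analysis"
begin

text \<open>The space X is the whole (nonempty) type 'a of class metric_space; its admissible
metric d is dist. A partition: cover by pairwise disjoint nonempty clopen sets.\<close>

definition clopen_partition :: "'a::topological_space set set \<Rightarrow> bool" where
  "clopen_partition U \<longleftrightarrow>
     (\<forall>B\<in>U. B \<noteq> {} \<and> open B \<and> closed B) \<and>
     (\<forall>B1\<in>U. \<forall>B2\<in>U. B1 \<noteq> B2 \<longrightarrow> B1 \<inter> B2 = {}) \<and>
     \<Union>U = UNIV"

definition defining_sequence :: "(nat \<Rightarrow> 'a::topological_space set set) \<Rightarrow> bool" where
  "defining_sequence \<U> \<longleftrightarrow>
     (\<forall>n. clopen_partition (\<U> n)) \<and>
     (\<forall>n. \<forall>B\<in>\<U> (Suc n). \<exists>V\<in>\<U> n. B \<subseteq> V) \<and>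
     topological_basis (\<Union>n. \<U> n)"

definition complete_defseq :: "(nat \<Rightarrow> 'a set set) \<Rightarrow> bool" where
  "complete_defseq \<U> \<longleftrightarrow>
     (\<forall>W::nat \<Rightarrow> 'a set. (\<forall>n. W n \<in> \<U> n) \<and> (\<forall>n. W (Suc n) \<subseteq> W n)
        \<longrightarrow> (\<Inter>n. W n) \<noteq> {})"

definition tame_defseq :: "(nat \<Rightarrow> 'a::metric_space set set) \<Rightarrow> bool" where
  "tame_defseq \<U> \<longleftrightarrow>
     (\<forall>e>0. \<exists>N. \<forall>n\<ge>N. \<forall>B\<in>\<U> n. \<forall>x\<in>B. \<forall>y\<in>B. dist x y \<le> e) \<and>
     (\<forall>n. \<exists>\<rho>>0. \<forall>B1\<in>\<U> n. \<forall>B2\<in>\<U> n. B1 \<noteq> B2 \<longrightarrow>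
          (\<forall>x1\<in>B1. \<forall>x2\<in>B2. dist x1 x2 \<ge> \<rho>))"

definition finite_shadowing :: "('a::metric_space \<Rightarrow> 'a) \<Rightarrow> bool" where
  "finite_shadowing f \<longleftrightarrow>
     (\<forall>\<epsilon>>0. \<exists>\<delta>>0. \<forall>(m::nat) (xs::nat \<Rightarrow> 'a).
        (\<forall>i<m. dist (f (xs i)) (xs (Suc i)) < \<delta>) \<longrightarrow>
        (\<exists>x. \<forall>i\<le>m. dist ((f ^^ i) x) (xs i) < \<epsilon>))"

definition PO :: "('a \<Rightarrow> 'a) \<Rightarrow> 'a set set \<Rightarrow> (nat \<Rightarrow> 'a set) set" where
  "PO f U = {Os. (\<forall>i. Os i \<in> U) \<and> (\<forall>i. f ` (Os i) \<inter> Os (Suc i) \<noteq> {})}"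

definition seq_dist :: "(nat \<Rightarrow> 'b) \<Rightarrow> (nat \<Rightarrow> 'b) \<Rightarrow> real" where
  "seq_dist s t = (if s = t then 0 else 1 / real (Suc (LEAST i. s i \<noteq> t i)))"

definition shift :: "(nat \<Rightarrow> 'b) \<Rightarrow> (nat \<Rightarrow> 'b)" where
  "shift s = (\<lambda>i. s (Suc i))"

definition bond :: "'a set set \<Rightarrow> (nat \<Rightarrow> 'a set) \<Rightarrow> (nat \<Rightarrow> 'a set)" where
  "bond U Os = (\<lambda>i. THE V. V \<in> U \<and> Os i \<subseteq> V)"

definition inv_lim :: "('a \<Rightarrow> 'a) \<Rightarrow> (nat \<Rightarrow> 'a set set) \<Rightarrow> (nat \<Rightarrow> nat \<Rightarrow> 'a set) set" where
  "inv_lim f \<U> = {ys. (\<forall>n. ys n \<in> PO f (\<U> n)) \<and> (\<forall>n. ys n = bond (\<U> n) (ys (Suc n)))}"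

definition dist_Pi :: "(nat \<Rightarrow> nat \<Rightarrow> 'b) \<Rightarrow> (nat \<Rightarrow> nat \<Rightarrow> 'b) \<Rightarrow> real" where
  "dist_Pi ys zs = (SUP n. seq_dist (ys n) (zs n) / real (Suc n))"

definition sigma_star :: "(nat \<Rightarrow> nat \<Rightarrow> 'b) \<Rightarrow> (nat \<Rightarrow> nat \<Rightarrow> 'b)" where
  "sigma_star ys = (\<lambda>n. shift (ys n))"

definition mcont :: "'x set \<Rightarrow> ('x \<Rightarrow> 'x \<Rightarrow> real) \<Rightarrow> ('y \<Rightarrow> 'y \<Rightarrow> real) \<Rightarrow> ('x \<Rightarrow> 'y) \<Rightarrow> bool" where
  "mcont S dS dT g \<longleftrightarrow>
     (\<forall>x\<in>S. \<forall>e>0. \<exists>\<delta>>0. \<forall>y\<in>S. dS x y < \<delta> \<longrightarrow> dT (g x) (g y) < e)"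

definition mucont :: "'x set \<Rightarrow> ('x \<Rightarrow> 'x \<Rightarrow> real) \<Rightarrow> ('y \<Rightarrow> 'y \<Rightarrow> real) \<Rightarrow> ('x \<Rightarrow> 'y) \<Rightarrow> bool" where
  "mucont S dS dT g \<longleftrightarrow>
     (\<forall>e>0. \<exists>\<delta>>0. \<forall>x\<in>S. \<forall>y\<in>S. dS x y < \<delta> \<longrightarrow> dT (g x) (g y) < e)"

definition conjugacy :: "('a::metric_space \<Rightarrow> 'a) \<Rightarrow> 'b set \<Rightarrow> ('b \<Rightarrow> 'b \<Rightarrow> real)
    \<Rightarrow> ('b \<Rightarrow> 'b) \<Rightarrow> ('a \<Rightarrow> 'b) \<Rightarrow> bool" where
  "conjugacy f L dL g h \<longleftrightarrow>
     bij_betw h UNIV L \<and> mcont UNIV dist dL h \<and> mcont L dL dist (inv_into UNIV h) \<and>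
     (\<forall>x. h (f x) = g (h x))"

definition uniform_conjugacy :: "('a::metric_space \<Rightarrow> 'a) \<Rightarrow> 'b set \<Rightarrow> ('b \<Rightarrow> 'b \<Rightarrow> real)
    \<Rightarrow> ('b \<Rightarrow> 'b) \<Rightarrow> ('a \<Rightarrow> 'b) \<Rightarrow> bool" where
  "uniform_conjugacy f L dL g h \<longleftrightarrow>
     conjugacy f L dL g h \<and> mucont UNIV dist dL h \<and> mucont L dL dist (inv_into UNIV h)"

end

theory Submission
  imports Defs
begin

text \<open>The conjugacy sends a point x to its itinerary, the family of cells U_n[f^i x].
  Tameness makes it injective, continuous, and uniformly continuous in the inverse direction:
  a small d_Pi distance forces agreement of level-n cells, which have small diameter, while
  points closer than rho_n share their level-n cell. Surjectivity is where shadowing and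
  completeness enter. Given a point of the inverse limit, points chosen along its level-k cells
  form a delta-pseudo-orbit once level-k cells are delta-small, so finite shadowing yields points
  following the prescribed level-j cells for m steps. By completeness these points converge,
  and as cells are closed the limit has exactly the prescribed itinerary.\<close>

lemma continuous_on_funpow:
  fixes f :: "'a::topological_space \<Rightarrow> 'a"
  shows "continuous_on UNIV f \<Longrightarrow> continuous_on UNIV (f ^^ i)"
  by (induction i) (auto intro: continuous_on_compose2[of UNIV f])

lemma uniformly_continuous_on_funpow:
  fixes f :: "'a::metric_space \<Rightarrow> 'a"
  shows "uniformly_continuous_on UNIV f \<Longrightarrow> uniformly_continuous_on UNIV (f ^^ i)"
proof (induction i)
  case (Suc i)
  have "uniformly_continuous_on (range (f ^^ i)) f"
    using Suc.prems unfolding uniformly_continuous_on_def by blast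
  then show ?case
    using uniformly_continuous_on_compose[OF Suc.IH[OF Suc.prems]] by simp
qed (simp add: id_def uniformly_continuous_on_id)

lemma mcont_UNIV_nhdsI:
  fixes g :: "'a::metric_space \<Rightarrow> 'b"
  assumes "\<And>x e. e > 0 \<Longrightarrow> eventually (\<lambda>y. dT (g x) (g y) < e) (nhds x)"
  shows "mcont UNIV dist dT g"
  unfolding mcont_def
proof (intro ballI allI impI)
  fix x and e :: real assume "e > 0"
  then obtain d where "d > 0" "\<forall>y. dist y x < d \<longrightarrow> dT (g x) (g y) < e"
    using assms unfolding eventually_nhds_metric by blast
  then show "\<exists>d>0. \<forall>y\<in>UNIV. dist x y < d \<longrightarrow> dT (g x) (g y) < e"
    by (metis dist_commute)
qed

lemma mucont_UNIV_uniformityI: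
  fixes g :: "'a::metric_space \<Rightarrow> 'b"
  assumes "\<And>e. e > 0 \<Longrightarrow> eventually (\<lambda>(x, y). dT (g x) (g y) < e) uniformity"
  shows "mucont UNIV dist dT g"
  using assms unfolding mucont_def eventually_uniformity_metric by auto

lemma mucont_imp_mcont: "mucont S dS dT g \<Longrightarrow> mcont S dS dT g"
  unfolding mucont_def mcont_def by blast

lemma seq_dist_nonneg: "0 \<le> seq_dist s t"
  by (simp add: seq_dist_def)

lemma seq_dist_le_1: "seq_dist s t \<le> 1"
  by (simp add: seq_dist_def divide_simps)

lemma seq_dist_le_if_eq_prefix:
  assumes "\<forall>i<N. s i = t i"
  shows "seq_dist s t \<le> 1 / real (Suc N)"
proof (cases "s = t")
  case False
  then have "\<exists>i. s i \<noteq> t i"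
    by auto
  then have "s (LEAST i. s i \<noteq> t i) \<noteq> t (LEAST i. s i \<noteq> t i)"
    by (rule LeastI_ex)
  then have "N \<le> (LEAST i. s i \<noteq> t i)"
    using assms by (meson not_le)
  then show ?thesis
    using False by (simp add: seq_dist_def frac_le)
qed (simp add: seq_dist_def)

lemma seq_dist_eq_1: "s 0 \<noteq> t 0 \<Longrightarrow> seq_dist s t = 1"
  by (auto simp: seq_dist_def Least_eq_0)

lemma dist_Pi_ge: "seq_dist (ys n) (zs n) / real (Suc n) \<le> dist_Pi ys zs"
proof -
  have "seq_dist (ys m) (zs m) / real (Suc m) \<le> 1" for m
    using seq_dist_le_1[of "ys m" "zs m"] seq_dist_nonneg[of "ys m" "zs m"]
    by (simp add: divide_le_eq)
  then show ?thesis
    unfolding dist_Pi_def by (intro cSUP_upper bdd_aboveI2[where M=1]) auto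
qed

lemma dist_Pi_le_if_eq_prefix:
  assumes "\<forall>n<N. \<forall>i<N. ys n i = zs n i"
  shows "dist_Pi ys zs \<le> 1 / real (Suc N)"
  unfolding dist_Pi_def
proof (rule cSUP_least)
  fix n
  have "seq_dist (ys n) (zs n) / real (Suc n) \<le> seq_dist (ys n) (zs n)"
    using seq_dist_nonneg[of "ys n" "zs n"] by (simp add: divide_le_eq mult_le_cancel_left1)
  moreover have "seq_dist (ys n) (zs n) \<le> 1 / real (Suc N)" if "n < N"
    using that assms by (intro seq_dist_le_if_eq_prefix) blast
  moreover have "seq_dist (ys n) (zs n) / real (Suc n) \<le> 1 / real (Suc N)" if "N \<le> n"
  proof -
    have "seq_dist (ys n) (zs n) / real (Suc n) \<le> 1 / real (Suc n)"
      by (rule divide_right_mono[OF seq_dist_le_1]) simp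
    also have "\<dots> \<le> 1 / real (Suc N)"
      using that by (simp add: frac_le)
    finally show ?thesis .
  qed
  ultimately show "seq_dist (ys n) (zs n) / real (Suc n) \<le> 1 / real (Suc N)"
    by fastforce
qed simp

lemma dist_Pi_less_imp_eq:
  assumes "dist_Pi ys zs < 1 / real (Suc n)"
  shows "ys n 0 = zs n 0"
  using assms dist_Pi_ge[of ys n zs] seq_dist_eq_1 by fastforce

locale tame_defining_sequence =
  fixes U :: "nat \<Rightarrow> 'a::metric_space set set"
  assumes defseq: "defining_sequence U"
    and tame: "tame_defseq U"
begin

lemma clopen_partition_U: "clopen_partition (U n)"
  using defseq by (simp add: defining_sequence_def)

lemma closed_member: "B \<in> U n \<Longrightarrow> closed B"
  and open_member: "B \<in> U n \<Longrightarrow> open B"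
  using clopen_partition_U[of n] by (auto simp: clopen_partition_def)

lemma ex1_member: "\<exists>!B. B \<in> U n \<and> z \<in> B"
proof -
  have "z \<in> \<Union>(U n)"
    using clopen_partition_U[of n] by (simp add: clopen_partition_def)
  then obtain B where B: "B \<in> U n" "z \<in> B"
    by blast
  moreover have "C = B" if "C \<in> U n" "z \<in> C" for C
    using clopen_partition_U[of n] B that unfolding clopen_partition_def by blast
  ultimately show ?thesis
    by blast
qed

definition cell :: "nat \<Rightarrow> 'a \<Rightarrow> 'a set" where
  "cell n z = (THE B. B \<in> U n \<and> z \<in> B)"

lemma cell_in: "cell n z \<in> U n"
  and mem_cell: "z \<in> cell n z"
  using theI'[OF ex1_member[of n z]] unfolding cell_def by auto

lemma cell_eq: "B \<in> U n \<Longrightarrow> z \<in> B \<Longrightarrow> cell n z = B"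
  using cell_in mem_cell ex1_member by blast

lemma cell_Suc_subset: "cell (Suc n) z \<subseteq> cell n z"
proof -
  obtain V where "V \<in> U n" "cell (Suc n) z \<subseteq> V"
    using defseq cell_in unfolding defining_sequence_def by blast
  moreover have "z \<in> V"
    using calculation(2) mem_cell by blast
  ultimately show ?thesis
    using cell_eq by blast
qed

lemma cell_antimono: "n \<le> m \<Longrightarrow> cell m z \<subseteq> cell n z"
  by (induction m rule: dec_induct) (use cell_Suc_subset in blast)+

lemma cell_eq_mono:
  assumes "cell m z = cell m w" "n \<le> m"
  shows "cell n z = cell n w"
proof -
  have "z \<in> cell n w"
    using assms mem_cell[of z m] cell_antimono[of n m w] by auto
  then show ?thesis
    by (rule cell_eq[OF cell_in])
qed

lemma coarser_cell_eq:
  assumes "B \<in> U (Suc n)" "w \<in> B"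
  shows "(THE V. V \<in> U n \<and> B \<subseteq> V) = cell n w"
proof (rule the_equality)
  have "cell (Suc n) w = B"
    using assms by (rule cell_eq)
  then show "cell n w \<in> U n \<and> B \<subseteq> cell n w"
    using cell_in cell_Suc_subset by blast
  show "V \<in> U n \<and> B \<subseteq> V \<Longrightarrow> V = cell n w" for V
    using assms cell_eq by blast
qed

lemma eventually_cell_diam_less:
  assumes "e > 0"
  shows "eventually (\<lambda>n. \<forall>z w. cell n z = cell n w \<longrightarrow> dist z w < e) sequentially"
proof -
  have "e / 2 > 0"
    using assms by simp
  then obtain N where N: "\<forall>n\<ge>N. \<forall>B\<in>U n. \<forall>x\<in>B. \<forall>y\<in>B. dist x y \<le> e / 2"
    using tame[unfolded tame_defseq_def, THEN conjunct1, rule_format] by blast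
  have "dist z w < e" if "N \<le> n" "cell n z = cell n w" for n z w
  proof -
    have "w \<in> cell n z"
      using that(2) mem_cell by simp
    then have "dist z w \<le> e / 2"
      using N[rule_format, OF that(1) cell_in mem_cell] by simp
    then show ?thesis
      using \<open>e > 0\<close> by simp
  qed
  then show ?thesis
    unfolding eventually_sequentially by blast
qed

lemma ex_cell_diam_less: "e > 0 \<Longrightarrow> \<exists>n. \<forall>z w. cell n z = cell n w \<longrightarrow> dist z w < e"
  using eventually_happens'[OF sequentially_bot eventually_cell_diam_less] by blast

lemma ex_dist_less_imp_cell_eq: "\<exists>r>0. \<forall>z w. dist z w < r \<longrightarrow> cell n z = cell n w"
proof -
  obtain r where "r > 0" and r: "\<forall>B1\<in>U n. \<forall>B2\<in>U n. B1 \<noteq> B2 \<longrightarrow>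
      (\<forall>x1\<in>B1. \<forall>x2\<in>B2. dist x1 x2 \<ge> r)"
    using tame[unfolded tame_defseq_def, THEN conjunct2, rule_format, of n] by blast
  have "cell n z = cell n w" if "dist z w < r" for z w
  proof (rule ccontr)
    assume "cell n z \<noteq> cell n w"
    then have "r \<le> dist z w"
      by (rule r[rule_format, OF cell_in cell_in _ mem_cell mem_cell])
    then show False
      using that by simp
  qed
  then show ?thesis
    using \<open>r > 0\<close> by blast
qed

lemma LIMSEQ_cellI:
  assumes "\<And>n. eventually (\<lambda>k. cell n (z k) = cell n x) sequentially"
  shows "z \<longlonglongrightarrow> x"
proof (rule metric_LIMSEQ_I)
  fix e :: real assume "e > 0"
  then obtain n where n: "\<forall>z w. cell n z = cell n w \<longrightarrow> dist z w < e"
    using ex_cell_diam_less by blast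
  obtain K where "\<forall>k\<ge>K. cell n (z k) = cell n x"
    using assms[of n] unfolding eventually_sequentially by blast
  then show "\<exists>K. \<forall>k\<ge>K. dist (z k) x < e"
    using n by blast
qed

definition itinerary :: "('a \<Rightarrow> 'a) \<Rightarrow> 'a \<Rightarrow> nat \<Rightarrow> nat \<Rightarrow> 'a set" where
  "itinerary f x = (\<lambda>n i. cell n ((f ^^ i) x))"

lemma itinerary_in_inv_lim: "itinerary f x \<in> inv_lim f U"
  unfolding inv_lim_def PO_def
proof (intro CollectI conjI allI)
  fix n i
  show "itinerary f x n i \<in> U n"
    by (simp add: itinerary_def cell_in)
  have "f ((f ^^ i) x) \<in> f ` itinerary f x n i \<inter> itinerary f x n (Suc i)"
    by (simp add: itinerary_def mem_cell)
  then show "f ` itinerary f x n i \<inter> itinerary f x n (Suc i) \<noteq> {}"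
    by blast
  show "itinerary f x n = bond (U n) (itinerary f x (Suc n))"
    unfolding itinerary_def bond_def
    by (rule ext, rule coarser_cell_eq[symmetric, OF cell_in mem_cell])
qed

lemma itinerary_comp: "itinerary f (f x) = sigma_star (itinerary f x)"
  unfolding itinerary_def sigma_star_def shift_def
  by (simp add: funpow_Suc_right del: funpow.simps)

lemma inj_itinerary: "inj (itinerary f)"
proof (rule injI)
  fix x y assume eq: "itinerary f x = itinerary f y"
  show "x = y"
  proof (rule ccontr)
    assume "x \<noteq> y"
    then have "dist x y > 0"
      by simp
    then obtain n where n: "\<forall>z w. cell n z = cell n w \<longrightarrow> dist z w < dist x y"
      using ex_cell_diam_less by blast
    have "itinerary f x n 0 = itinerary f y n 0"
      using eq by simp
    then have "cell n x = cell n y"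
      by (simp add: itinerary_def)
    then show False
      using n by blast
  qed
qed

lemma dist_Pi_itinerary_le:
  assumes "\<forall>i<N. cell N ((f ^^ i) x) = cell N ((f ^^ i) y)"
  shows "dist_Pi (itinerary f x) (itinerary f y) \<le> 1 / real (Suc N)"
proof (rule dist_Pi_le_if_eq_prefix, intro allI impI)
  fix n i assume "n < N" "i < N"
  then have "cell N ((f ^^ i) x) = cell N ((f ^^ i) y)"
    using assms by blast
  then have "cell n ((f ^^ i) x) = cell n ((f ^^ i) y)"
    by (rule cell_eq_mono) (use \<open>n < N\<close> in simp)
  then show "itinerary f x n i = itinerary f y n i"
    by (simp add: itinerary_def)
qed

lemma cell_eq_if_dist_Pi_itinerary_less:
  assumes "dist_Pi (itinerary f x) (itinerary f y) < 1 / real (Suc n)"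
  shows "cell n x = cell n y"
proof -
  have "itinerary f x n 0 = itinerary f y n 0"
    using assms by (rule dist_Pi_less_imp_eq)
  then show ?thesis
    by (simp add: itinerary_def)
qed

lemma eventually_nhds_cell_funpow:
  fixes f :: "'a \<Rightarrow> 'a"
  assumes "continuous_on UNIV f"
  shows "eventually (\<lambda>y. cell n ((f ^^ i) x) = cell n ((f ^^ i) y)) (nhds x)"
proof -
  have "open ((f ^^ i) -` cell n ((f ^^ i) x))"
    using continuous_on_funpow[OF assms] open_member[OF cell_in]
    by (simp add: continuous_on_open_vimage)
  moreover have "x \<in> (f ^^ i) -` cell n ((f ^^ i) x)"
    by (simp add: mem_cell)
  moreover have "cell n ((f ^^ i) x) = cell n ((f ^^ i) y)" if "y \<in> (f ^^ i) -` cell n ((f ^^ i) x)" for y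
    using that cell_eq[OF cell_in] by (metis vimageE)
  ultimately show ?thesis
    unfolding eventually_nhds by blast
qed

lemma eventually_uniformity_cell_funpow:
  fixes f :: "'a \<Rightarrow> 'a"
  assumes "uniformly_continuous_on UNIV f"
  shows "eventually (\<lambda>(x, y). cell n ((f ^^ i) x) = cell n ((f ^^ i) y)) uniformity"
proof -
  obtain r where "r > 0" and r: "\<forall>z w. dist z w < r \<longrightarrow> cell n z = cell n w"
    using ex_dist_less_imp_cell_eq by blast
  have "eventually (\<lambda>(z, w). dist z w < r) uniformity"
    using \<open>r > 0\<close> by (auto simp: eventually_uniformity_metric)
  from uniformly_continuous_onD[OF uniformly_continuous_on_funpow[OF assms] this]
  show ?thesis
    by eventually_elim (use r in auto)
qed

lemma mcont_itinerary:
  assumes "continuous_on UNIV f"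
  shows "mcont UNIV dist dist_Pi (itinerary f)"
proof (rule mcont_UNIV_nhdsI)
  fix x and e :: real assume "e > 0"
  then obtain N where N: "1 / real (Suc N) < e"
    by (rule nat_approx_posE)
  have "eventually (\<lambda>y. \<forall>i\<in>{..<N}. cell N ((f ^^ i) x) = cell N ((f ^^ i) y)) (nhds x)"
    using eventually_nhds_cell_funpow[OF assms] by (intro eventually_ball_finite) auto
  then show "eventually (\<lambda>y. dist_Pi (itinerary f x) (itinerary f y) < e) (nhds x)"
    by eventually_elim (rule le_less_trans[OF dist_Pi_itinerary_le N], simp)
qed

lemma mucont_itinerary:
  assumes "uniformly_continuous_on UNIV f"
  shows "mucont UNIV dist dist_Pi (itinerary f)"
proof (rule mucont_UNIV_uniformityI)
  fix e :: real assume "e > 0"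
  then obtain N where N: "1 / real (Suc N) < e"
    by (rule nat_approx_posE)
  have "eventually (\<lambda>p. \<forall>i\<in>{..<N}. cell N ((f ^^ i) (fst p)) = cell N ((f ^^ i) (snd p)))
      uniformity"
    using eventually_uniformity_cell_funpow[OF assms]
    by (intro eventually_ball_finite) (simp_all add: case_prod_beta')
  then show "eventually (\<lambda>(x, y). dist_Pi (itinerary f x) (itinerary f y) < e) uniformity"
    by (rule eventually_mono) (auto intro!: le_less_trans[OF dist_Pi_itinerary_le N])
qed

lemma mucont_inv_itinerary:
  "mucont (range (itinerary f)) dist_Pi dist (inv_into UNIV (itinerary f))"
  unfolding mucont_def
proof (intro allI impI)
  fix e :: real assume "e > 0"
  then obtain n where n: "\<forall>z w. cell n z = cell n w \<longrightarrow> dist z w < e"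
    using ex_cell_diam_less by blast
  have "dist (inv_into UNIV (itinerary f) p) (inv_into UNIV (itinerary f) q) < e"
    if "p = itinerary f x" "q = itinerary f y" "dist_Pi p q < 1 / real (Suc n)" for p q x y
    using n cell_eq_if_dist_Pi_itinerary_less that by (simp add: inv_into_f_f[OF inj_itinerary])
  then show "\<exists>d>0. \<forall>p\<in>range (itinerary f). \<forall>q\<in>range (itinerary f). dist_Pi p q < d \<longrightarrow>
      dist (inv_into UNIV (itinerary f) p) (inv_into UNIV (itinerary f) q) < e"
    by (intro exI[of _ "1 / real (Suc n)"]) auto
qed

lemma inv_lim_in_partition: "ys \<in> inv_lim f U \<Longrightarrow> ys k i \<in> U k"
  unfolding inv_lim_def PO_def by blast

lemma inv_lim_step: "ys \<in> inv_lim f U \<Longrightarrow> f ` ys k i \<inter> ys k (Suc i) \<noteq> {}"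
  unfolding inv_lim_def PO_def by blast

lemma inv_lim_bond: "ys \<in> inv_lim f U \<Longrightarrow> ys k = bond (U k) (ys (Suc k))"
  unfolding inv_lim_def by blast

lemma cell_eq_inv_lim: "ys \<in> inv_lim f U \<Longrightarrow> z \<in> ys k i \<Longrightarrow> cell k z = ys k i"
  by (rule cell_eq[OF inv_lim_in_partition])

lemma inv_lim_Suc_subset:
  assumes ys: "ys \<in> inv_lim f U"
  shows "ys (Suc k) i \<subseteq> ys k i"
proof -
  obtain w where w: "w \<in> ys (Suc k) i"
    using inv_lim_step[OF ys] by blast
  have "ys (Suc k) i = cell (Suc k) w"
    using cell_eq_inv_lim[OF ys w] by simp
  also have "\<dots> \<subseteq> cell k w"
    by (rule cell_Suc_subset)
  also have "\<dots> = (THE V. V \<in> U k \<and> ys (Suc k) i \<subseteq> V)"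
    using inv_lim_in_partition[OF ys] w by (rule coarser_cell_eq[symmetric])
  also have "\<dots> = bond (U k) (ys (Suc k)) i"
    by (simp add: bond_def)
  also have "\<dots> = ys k i"
    by (rule fun_cong[OF inv_lim_bond[OF ys], symmetric])
  finally show ?thesis .
qed

lemma inv_lim_antimono:
  assumes "ys \<in> inv_lim f U" "k \<le> m"
  shows "ys m i \<subseteq> ys k i"
  using assms(2)
  by (induction m rule: dec_induct) (use inv_lim_Suc_subset[OF assms(1)] in blast)+

lemma inv_lim_shadowed:
  assumes shadow: "finite_shadowing f" and ys: "ys \<in> inv_lim f U"
  shows "\<exists>z. \<forall>i\<le>m. (f ^^ i) z \<in> ys j i"
proof -
  obtain r where "r > 0" and r: "\<forall>z w. dist z w < r \<longrightarrow> cell j z = cell j w"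
    using ex_dist_less_imp_cell_eq by blast
  obtain \<delta> where "\<delta> > 0" and \<delta>: "\<forall>(m::nat) xs. (\<forall>i<m. dist (f (xs i)) (xs (Suc i)) < \<delta>) \<longrightarrow>
      (\<exists>z. \<forall>i\<le>m. dist ((f ^^ i) z) (xs i) < r)"
    using shadow \<open>r > 0\<close> unfolding finite_shadowing_def by blast
  obtain K where K: "\<forall>n\<ge>K. \<forall>z w. cell n z = cell n w \<longrightarrow> dist z w < \<delta>"
    using eventually_cell_diam_less[OF \<open>\<delta> > 0\<close>] unfolding eventually_sequentially by blast
  define k where "k = max K j"
  have "K \<le> k" "j \<le> k"
    by (simp_all add: k_def)
  then have k: "\<forall>z w. cell k z = cell k w \<longrightarrow> dist z w < \<delta>"
    using K by blast
  have "\<exists>a. \<forall>i. a i \<in> ys k i \<and> f (a i) \<in> ys k (Suc i)"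
    using inv_lim_step[OF ys] by (intro choice) blast
  then obtain a where a: "\<forall>i. a i \<in> ys k i \<and> f (a i) \<in> ys k (Suc i)"
    by blast
  \<comment> \<open>consecutive points lie in a common cell of level k, so they form a \<delta>-pseudo-orbit\<close>
  have "\<forall>i<m. dist (f (a i)) (a (Suc i)) < \<delta>"
  proof (intro allI impI)
    fix i
    have "cell k (f (a i)) = ys k (Suc i)"
      by (rule cell_eq_inv_lim[OF ys]) (use a in blast)
    moreover have "cell k (a (Suc i)) = ys k (Suc i)"
      by (rule cell_eq_inv_lim[OF ys]) (use a in blast)
    ultimately show "dist (f (a i)) (a (Suc i)) < \<delta>"
      using k by simp
  qed
  then obtain z where z: "\<forall>i\<le>m. dist ((f ^^ i) z) (a i) < r"
    using \<delta> by blast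
  have "(f ^^ i) z \<in> ys j i" if "i \<le> m" for i
  proof -
    have "cell j ((f ^^ i) z) = cell j (a i)"
      by (rule r[rule_format, OF z[rule_format, OF that]])
    also have "\<dots> = ys j i"
      by (rule cell_eq_inv_lim[OF ys]) (use a inv_lim_antimono[OF ys \<open>j \<le> k\<close>] in blast)
    finally show ?thesis
      using mem_cell by blast
  qed
  then show ?thesis
    by blast
qed

lemma inv_lim_orbit:
  assumes compl: "complete_defseq U" and cont: "continuous_on UNIV f"
    and shadow: "finite_shadowing f" and ys: "ys \<in> inv_lim f U"
  shows "\<exists>x. \<forall>j i. (f ^^ i) x \<in> ys j i"
proof -
  have "\<exists>z. \<forall>k. \<forall>i\<le>k. (f ^^ i) (z k) \<in> ys k i"
    using inv_lim_shadowed[OF shadow ys] by (intro choice) blast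
  then obtain z where z: "\<And>k i. i \<le> k \<Longrightarrow> (f ^^ i) (z k) \<in> ys k i"
    by blast
  have "(\<Inter>n. ys n 0) \<noteq> {}"
    using compl[unfolded complete_defseq_def, rule_format, of "\<lambda>n. ys n 0"]
      inv_lim_in_partition[OF ys] inv_lim_Suc_subset[OF ys] by blast
  then obtain x where x: "\<And>n. x \<in> ys n 0"
    by blast
  have "z \<longlonglongrightarrow> x"
  proof (rule LIMSEQ_cellI)
    fix n
    have "cell n (z k) = cell n x" if "n \<le> k" for k
    proof -
      have "z k \<in> ys n 0"
        using z[of 0 k] inv_lim_antimono[OF ys that] by auto
      then show ?thesis
        using cell_eq_inv_lim[OF ys x] cell_eq_inv_lim[OF ys] by simp
    qed
    then show "eventually (\<lambda>k. cell n (z k) = cell n x) sequentially"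
      unfolding eventually_sequentially by blast
  qed
  have "(f ^^ i) x \<in> ys j i" for i j
  proof (rule Lim_in_closed_set)
    show "closed (ys j i)"
      by (rule closed_member[OF inv_lim_in_partition[OF ys]])
    have "(f ^^ i) (z k) \<in> ys j i" if "max i j \<le> k" for k
      using z[of i k] inv_lim_antimono[OF ys, of j k i] that by auto
    then show "eventually (\<lambda>k. (f ^^ i) (z k) \<in> ys j i) sequentially"
      unfolding eventually_sequentially by blast
    show "((\<lambda>k. (f ^^ i) (z k)) \<longlongrightarrow> (f ^^ i) x) sequentially"
      using continuous_on_funpow[OF cont] \<open>z \<longlonglongrightarrow> x\<close>
      by (rule continuous_on_tendsto_compose) simp_all
  qed simp
  then show ?thesis
    by blast
qed

lemma range_itinerary:
  assumes "complete_defseq U" "continuous_on UNIV f" "finite_shadowing f"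
  shows "range (itinerary f) = inv_lim f U"
proof
  show "range (itinerary f) \<subseteq> inv_lim f U"
    using itinerary_in_inv_lim by blast
  show "inv_lim f U \<subseteq> range (itinerary f)"
  proof
    fix ys assume ys: "ys \<in> inv_lim f U"
    then obtain x where "\<forall>j i. (f ^^ i) x \<in> ys j i"
      using inv_lim_orbit assms by blast
    then have "itinerary f x = ys"
      unfolding itinerary_def by (intro ext cell_eq_inv_lim[OF ys]) blast
    then show "ys \<in> range (itinerary f)"
      by blast
  qed
qed

lemma conjugacy_itinerary:
  assumes "complete_defseq U" "continuous_on UNIV f" "finite_shadowing f"
  shows "conjugacy f (inv_lim f U) dist_Pi sigma_star (itinerary f)"
  unfolding conjugacy_def
proof (intro conjI allI)
  show "bij_betw (itinerary f) UNIV (inv_lim f U)"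
    using inj_itinerary range_itinerary[OF assms] by (simp add: bij_betw_def)
  show "mcont UNIV dist dist_Pi (itinerary f)"
    using assms(2) by (rule mcont_itinerary)
  show "mcont (inv_lim f U) dist_Pi dist (inv_into UNIV (itinerary f))"
    using mucont_imp_mcont[OF mucont_inv_itinerary[of f]] range_itinerary[OF assms] by simp
  show "itinerary f (f x) = sigma_star (itinerary f x)" for x
    by (rule itinerary_comp)
qed

lemma uniform_conjugacy_itinerary:
  assumes "complete_defseq U" "uniformly_continuous_on UNIV f" "finite_shadowing f"
  shows "uniform_conjugacy f (inv_lim f U) dist_Pi sigma_star (itinerary f)"
proof -
  have "continuous_on UNIV f"
    using assms(2) by (rule uniformly_continuous_imp_continuous)
  then show ?thesis
    unfolding uniform_conjugacy_def
    using conjugacy_itinerary[OF assms(1) _ assms(3)] mucont_itinerary[OF assms(2)]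
      mucont_inv_itinerary[of f] range_itinerary[OF assms(1) _ assms(3)] by simp
qed

end

theorem theorem4p15:
  fixes f :: "'a::metric_space \<Rightarrow> 'a"
    and \<U> :: "nat \<Rightarrow> 'a set set"
  assumes separable: "\<exists>D::'a set. countable D \<and> closure D = UNIV"
    and cont: "continuous_on UNIV f"
    and defseq: "defining_sequence \<U>"
    and compl: "complete_defseq \<U>"
    and tame: "tame_defseq \<U>"
    and shadow: "finite_shadowing f"
  shows "(\<exists>h. conjugacy f (inv_lim f \<U>) dist_Pi sigma_star h)
    \<and> (uniformly_continuous_on UNIV f \<longrightarrow>
         (\<exists>h. uniform_conjugacy f (inv_lim f \<U>) dist_Pi sigma_star h))"
proof -
  interpret tame_defining_sequence \<U>
    using defseq tame by unfold_locales
  show ?thesis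
    using conjugacy_itinerary[OF compl cont shadow]
      uniform_conjugacy_itinerary[OF compl _ shadow] by blast
qed

end
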